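(* In the quantum groupoid $H_\mathcal{C}$, for all basis elements, $$\Delta(e^{ab}_{i;cd})=\sum_{j,k,p,q}\frac{\sqrt{d_id_jd_k}}{\sqrt{d_ad_bd_cd_d}}\;G^{ikj}_{pab}\;G^{ijk}_{qdc}\;e^{ap}_{j;cq}\otimes e^{pb}_{k;qd},$$ where $j,k$ range over simple objects such that $(i,j,k)$ is admissible.
   Context: $\mathcal{C}$ is a unitary fusion category which is multiplicity free and whose simple objects are self-dual with trivial Frobenius–Schur indicators; $d_a$ is the quantum dimension, $(a,b,c)$ admissible means $\mathrm{Hom}(a\otimes b,c)\ne0$. Trivalent vertices are normalized so that $\theta(a,b,c)=\sqrt{d_ad_bd_c}$. $F$-symbols $F^{abc}_{d;nm}$: the basis vector of $\mathrm{Hom}((a\otimes b)\otimes c,d)$ with intermediate $m$ equals $\sum_nF^{abc}_{d;nm}$ times that of $\mathrm{Hom}(a\otimes(b\otimes c),d)$ with intermediate $n$; they are unitary. Symmetric $6j$-symbols: $G^{abc}_{kmn}:=\frac{\sqrt{d_md_k}}{\sqrt{d_c}}F^{amk}_{b;cn}$ (the factor collapsing a triangular bubble with outer legs $a$ (top), $b$, $c$ and inner edges $m$ (between $a,c$), $n$ (between $a,b$), $k$ (between $b,c$) to a single vertex). $H_\mathcal{C}$ has basis $e^{ab}_{i;cd}$, with $(a,i,b)$ and $(i,d,c)$ admissible, spanning $\bigoplus\mathrm{Hom}(b,a\otimes i)\otimes\mathrm{Hom}(i\otimes d,c)$, drawn as an "H" diagram: a left vertical strand labeled $a$ at top and $b$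 at bottom, a right vertical strand labeled $c$ at top and $d$ at bottom, joined by a horizontal rung labeled $i$. Its comultiplication is defined by $\Delta(e^{ab}_{i;cd})=\sum_{j,k,p,q}\langle\hat e^{ab}_{i;cd},X^{ab;cd}_{j,k;p,q}\rangle\,e^{ap}_{j;cq}\otimes e^{pb}_{k;qd}$, where $X^{ab;cd}_{j,k;p,q}$ is the two-rung ladder diagram (left strand labeled $a,p,b$ from top to bottom, right strand $c,q,d$, upper rung $j$, lower rung $k$), and $\langle\hat e^{ab}_{i;cd},X\rangle$ denotes the coefficient of $e^{ab}_{i;cd}$ when $X$ is rewritten, via $F$-moves and bubble removal in $\mathcal{C}$, as a linear combination of the single-rung diagrams $e^{ab}_{i;cd}$. (The other structure maps: $e^{ab}_{i;cd}e^{a'b'}_{i';c'd'}=\frac{\delta_{c,a'}\delta_{d,b'}\delta_{i,i'}}{\sqrt{d_i}}e^{ab}_{i;c'd'}$, counit $\varepsilon(e^{ab}_{i;cd})=\delta_{ab}\delta_{cd}\delta_{i\mathbf 1}$.) *)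

theory Defs
  imports Complex_Main
begin

text \<open>
  Skeletal data of a multiplicity-free unitary fusion category whose simple objects are
  self-dual with trivial Frobenius--Schur indicators, with trivalent vertices normalised so
  that theta(a,b,c) = sqrt(d_a d_b d_c) (rotation-invariant vertices).
  Simple objects are the elements of a finite type 'l; u is the unit object;
  N a b c means that (a,b,c) is admissible; qd a is the quantum dimension d_a;
  F a b c e n m is the F-symbol F^{abc}_{e;nm}: the basis vector of Hom((a b) c, e) with
  intermediate m equals the sum over n of F^{abc}_{e;nm} times the basis vector of
  Hom(a (b c), e) with intermediate n.
\<close>

definition G6j :: "('l \<Rightarrow> real) \<Rightarrow> ('l \<Rightarrow> 'l \<Rightarrow> 'l \<Rightarrow> 'l \<Rightarrow> 'l \<Rightarrow> 'l \<Rightarrow> complex)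
                   \<Rightarrow> 'l \<Rightarrow> 'l \<Rightarrow> 'l \<Rightarrow> 'l \<Rightarrow> 'l \<Rightarrow> 'l \<Rightarrow> complex" where
  "G6j qd F a b c k m n = complex_of_real (sqrt (qd m * qd k) / sqrt (qd c)) * F a m k b c n"

text \<open>Tetrahedral (evaluation of the tetrahedron) normalisation of the 6j-symbol; its full
  tetrahedral symmetry expresses rotation invariance of the normalised vertices.\<close>
definition Tet6j :: "('l \<Rightarrow> real) \<Rightarrow> ('l \<Rightarrow> 'l \<Rightarrow> 'l \<Rightarrow> 'l \<Rightarrow> 'l \<Rightarrow> 'l \<Rightarrow> complex)
                   \<Rightarrow> 'l \<Rightarrow> 'l \<Rightarrow> 'l \<Rightarrow> 'l \<Rightarrow> 'l \<Rightarrow> 'l \<Rightarrow> complex" where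
  "Tet6j qd F a b c k m n = complex_of_real (sqrt (qd a * qd b * qd c)) * G6j qd F a b c k m n"

definition sym_ufc ::
  "('l::finite \<Rightarrow> 'l \<Rightarrow> 'l \<Rightarrow> bool) \<Rightarrow> 'l \<Rightarrow> ('l \<Rightarrow> real)
   \<Rightarrow> ('l \<Rightarrow> 'l \<Rightarrow> 'l \<Rightarrow> 'l \<Rightarrow> 'l \<Rightarrow> 'l \<Rightarrow> complex) \<Rightarrow> bool" where
  "sym_ufc N u qd F \<longleftrightarrow>
     \<comment> \<open>fusion rules: self-duality makes admissibility totally symmetric; unit object\<close>
     (\<forall>a b c. N a b c = N b a c \<and> N a b c = N a c b) \<and>
     (\<forall>a b. N u a b \<longleftrightarrow> a = b) \<and>
     \<comment> \<open>quantum dimensions\<close>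
     (\<forall>a. qd a > 0) \<and> qd u = 1 \<and>
     (\<forall>a b. qd a * qd b = (\<Sum>c\<in>{c. N a b c}. qd c)) \<and>
     \<comment> \<open>F-symbols vanish off admissible labels\<close>
     (\<forall>a b c e n m. F a b c e n m \<noteq> 0 \<longrightarrow> N a b m \<and> N m c e \<and> N b c n \<and> N a n e) \<and>
     \<comment> \<open>unitarity\<close>
     (\<forall>a b c e m m'. N a b m \<and> N m c e \<and> N a b m' \<and> N m' c e \<longrightarrow>
        (\<Sum>n\<in>UNIV. cnj (F a b c e n m) * F a b c e n m') = (if m = m' then 1 else 0)) \<and>
     (\<forall>a b c e n n'. N b c n \<and> N a n e \<and> N b c n' \<and> N a n' e \<longrightarrow>
        (\<Sum>m\<in>UNIV. F a b c e n m * cnj (F a b c e n' m)) = (if n = n' then 1 else 0)) \<and>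
     \<comment> \<open>pentagon equation (in the above basis-change convention)\<close>
     (\<forall>a b c d e m l s t. F m c d e s l * F a b s e t m =
        (\<Sum>n\<in>UNIV. F a b c l n m * F a n d e t l * F b c d t s n)) \<and>
     \<comment> \<open>tetrahedral symmetry (rotation invariance of the normalised vertices)\<close>
     (\<forall>a b c k m n. Tet6j qd F a b c k m n = Tet6j qd F b a c m k n \<and>
                     Tet6j qd F a b c k m n = Tet6j qd F a c b k n m \<and>
                     Tet6j qd F a b c k m n = Tet6j qd F k m c a b n)"

text \<open>Basis index of H_C: HIdx a b i c d stands for e^{ab}_{i;cd}.\<close>
datatype 'l hidx = HIdx 'l 'l 'l 'l 'l

fun hbasis :: "('l \<Rightarrow> 'l \<Rightarrow> 'l \<Rightarrow> bool) \<Rightarrow> 'l hidx \<Rightarrow> bool" where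
  "hbasis N (HIdx a b i c d) \<longleftrightarrow> N a i b \<and> N i d c"

text \<open>
  Diagrams with bottom legs b, d and top legs a, c are morphisms in Hom(b d, a c).  We
  represent such a morphism by its coordinates in the basis v_x (fusion vertex b d -> x
  followed by splitting vertex x -> a c, both theta-normalised), x simple.
  By an F-move, the H-diagram e^{ab}_{i;cd} equals sum_x F^{abd}_{c;xi} v_x
  (bend the leg a down: H is the tree ((a b)_i d) -> c, v_x the tree (a (b d)_x) -> c).
\<close>
definition hdiag :: "('l \<Rightarrow> 'l \<Rightarrow> 'l \<Rightarrow> 'l \<Rightarrow> 'l \<Rightarrow> 'l \<Rightarrow> complex)
                     \<Rightarrow> 'l \<Rightarrow> 'l \<Rightarrow> 'l \<Rightarrow> 'l \<Rightarrow> 'l \<Rightarrow> ('l \<Rightarrow> complex)" where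
  "hdiag F a b i c d = (\<lambda>x. F a b d c x i)"

text \<open>Two-rung ladder X^{ab;cd}_{j,k;p,q}: the composite of e^{pb}_{k;qd} (bottom) and
  e^{ap}_{j;cq} (top).  Composing v_x (top) with v_y (bottom) gives delta_{xy} times the
  bubble on x with inner edges p, q, i.e. sqrt(d_p d_q / d_x) v_x.\<close>
definition ladder :: "('l \<Rightarrow> 'l \<Rightarrow> 'l \<Rightarrow> bool) \<Rightarrow> ('l \<Rightarrow> real)
                      \<Rightarrow> ('l \<Rightarrow> 'l \<Rightarrow> 'l \<Rightarrow> 'l \<Rightarrow> 'l \<Rightarrow> 'l \<Rightarrow> complex)
                      \<Rightarrow> 'l \<Rightarrow> 'l \<Rightarrow> 'l \<Rightarrow> 'l \<Rightarrow> 'l \<Rightarrow> 'l \<Rightarrow> 'l \<Rightarrow> 'l \<Rightarrow> ('l \<Rightarrow> complex)" where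
  "ladder N qd F a b c d j k p q =
     (\<lambda>x. if N p q x then
            hdiag F a p j c q x * hdiag F p b k q d x
              * complex_of_real (sqrt (qd p * qd q / qd x))
          else 0)"

text \<open>Coefficient of e^{ab}_{i;cd} when a morphism X in Hom(b d, a c) (given by v-coordinates)
  is expanded in the basis of single-rung diagrams e^{ab}_{i';cd} (the change of basis
  between the v_x and the e^{ab}_{i';cd} is the unitary F-matrix).\<close>
definition coeff_e :: "('l::finite \<Rightarrow> 'l \<Rightarrow> 'l \<Rightarrow> 'l \<Rightarrow> 'l \<Rightarrow> 'l \<Rightarrow> complex)
                      \<Rightarrow> 'l \<Rightarrow> 'l \<Rightarrow> 'l \<Rightarrow> 'l \<Rightarrow> 'l \<Rightarrow> ('l \<Rightarrow> complex) \<Rightarrow> complex" where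
  "coeff_e F a b i c d X = (\<Sum>x\<in>UNIV. cnj (hdiag F a b i c d x) * X x)"

text \<open>Comultiplication of H_C on a basis element, as the function giving the coefficient of
  each basis tensor e1 \<otimes> e2 of H_C \<otimes> H_C:
  Delta(e^{ab}_{i;cd}) = sum_{j,k,p,q} <e^{ab}_{i;cd}^, X^{ab;cd}_{j,k;p,q}> e^{ap}_{j;cq} \<otimes> e^{pb}_{k;qd}.\<close>
fun comult :: "('l::finite \<Rightarrow> 'l \<Rightarrow> 'l \<Rightarrow> bool) \<Rightarrow> ('l \<Rightarrow> real)
               \<Rightarrow> ('l \<Rightarrow> 'l \<Rightarrow> 'l \<Rightarrow> 'l \<Rightarrow> 'l \<Rightarrow> 'l \<Rightarrow> complex)
               \<Rightarrow> 'l hidx \<Rightarrow> 'l hidx \<times> 'l hidx \<Rightarrow> complex" where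
  "comult N qd F (HIdx a b i c d) (HIdx a' p j c' q, HIdx p' b' k q' d') =
     (if a' = a \<and> c' = c \<and> p' = p \<and> q' = q \<and> b' = b \<and> d' = d
         \<and> hbasis N (HIdx a p j c q) \<and> hbasis N (HIdx p b k q d)
      then coeff_e F a b i c d (ladder N qd F a b c d j k p q)
      else 0)"

end

theory Submission
  imports Defs
begin

text \<open>
  In the vertex basis v_x of Hom(b d, a c) the coefficient of e^{ab}_{i;cd} in the ladder is
  sum_x conj(F^{abd}_{c;xi}) F^{apq}_{c;xj} F^{pbd}_{q;xk} sqrt(d_p d_q / d_x).  Tetrahedral
  symmetry turns this into the right-hand side of the pentagon equation paired with a
  conjugated row of an F-matrix; unitarity collapses the pairing to a product of two
  F-symbols, which tetrahedral symmetry again identifies with the two symmetric 6j-symbols.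
\<close>

locale sym_fusion_cat =
  fixes N :: "'l::finite \<Rightarrow> 'l \<Rightarrow> 'l \<Rightarrow> bool" and u :: 'l and qd :: "'l \<Rightarrow> real"
    and F :: "'l \<Rightarrow> 'l \<Rightarrow> 'l \<Rightarrow> 'l \<Rightarrow> 'l \<Rightarrow> 'l \<Rightarrow> complex"
  assumes sym_ufc: "sym_ufc N u qd F"
begin

lemma N_swap12: "N a b c = N b a c"
  and N_swap23: "N a b c = N a c b"
  using sym_ufc unfolding sym_ufc_def by (elim conjE, iprover)+

lemma qd_pos: "qd a > 0"
  using sym_ufc unfolding sym_ufc_def by (elim conjE) iprover

lemma F_nonzero_admissible:
  "F a b c e n m \<noteq> 0 \<Longrightarrow> N a b m \<and> N m c e \<and> N b c n \<and> N a n e"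
  using sym_ufc unfolding sym_ufc_def by (elim conjE) metis

lemma F_rows_orthonormal:
  "N b c n \<Longrightarrow> N a n e \<Longrightarrow> N b c n' \<Longrightarrow> N a n' e \<Longrightarrow>
   (\<Sum>m\<in>UNIV. F a b c e n m * cnj (F a b c e n' m)) = (if n = n' then 1 else 0)"
  using sym_ufc unfolding sym_ufc_def by (elim conjE) metis

lemma pentagon:
  "F m c d e s l * F a b s e t m = (\<Sum>n\<in>UNIV. F a b c l n m * F a n d e t l * F b c d t s n)"
  using sym_ufc unfolding sym_ufc_def by (elim conjE) metis

lemma Tet6j_swap12: "Tet6j qd F a b c k m n = Tet6j qd F b a c m k n"
  and Tet6j_swap23: "Tet6j qd F a b c k m n = Tet6j qd F a c b k n m"
  and Tet6j_flip: "Tet6j qd F a b c k m n = Tet6j qd F k m c a b n"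
  using sym_ufc unfolding sym_ufc_def by (elim conjE, metis)+

definition sdim :: "'l \<Rightarrow> complex" where
  "sdim x = complex_of_real (sqrt (qd x))"

lemma sdim_nonzero [simp]: "sdim x \<noteq> 0"
  using qd_pos[of x] by (simp add: sdim_def)

lemma Tet6j_eq_F: "Tet6j qd F a b c k m n = sdim a * sdim b * sdim k * sdim m * F a m k b c n"
proof -
  have "sqrt (qd c) \<noteq> 0" using qd_pos[of c] by simp
  then have "sqrt (qd a * qd b * qd c) * (sqrt (qd m * qd k) / sqrt (qd c))
        = sqrt (qd a) * sqrt (qd b) * sqrt (qd k) * sqrt (qd m)"
    by (simp add: real_sqrt_mult field_simps)
  then have "complex_of_real (sqrt (qd a * qd b * qd c)) * complex_of_real (sqrt (qd m * qd k) / sqrt (qd c))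
        = sdim a * sdim b * sdim k * sdim m"
    unfolding sdim_def of_real_mult[symmetric] by simp
  then show ?thesis
    unfolding Tet6j_def G6j_def mult.assoc[symmetric] by simp
qed

text \<open>Up to the weight sdim a * sdim b * sdim c * sdim e, F a b c e n m is Tet6j qd F a e n c b m;
  the three generating symmetries of the tetrahedron give the first three identities.\<close>

lemma F_sym_outer: "F a b c e n m = F e c b a n m"
  using Tet6j_swap12[of a e n c b m] by (simp add: Tet6j_eq_F mult_ac)

lemma F_sym_flip: "F a b c e n m = F c e a b n m"
  using Tet6j_flip[of a e n c b m] by (simp add: Tet6j_eq_F mult_ac)

lemma F_sym_weighted: "F a b c e n m * (sdim b * sdim e) = F a m c n e b * (sdim m * sdim n)"
proof -
  have "sdim a * sdim c * (F a b c e n m * (sdim b * sdim e))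
      = sdim a * sdim c * (F a m c n e b * (sdim m * sdim n))"
    using Tet6j_swap23[of a e n c b m] by (simp add: Tet6j_eq_F mult_ac)
  then show ?thesis by simp
qed

lemma F_reflect: "F a b c e n m = F c b a e m n"
proof -
  have "F a b c e n m * (sdim b * sdim e) = F a m c n e b * (sdim m * sdim n)"
    by (rule F_sym_weighted)
  also have "\<dots> = F c n a m e b * (sdim n * sdim m)"
    by (simp add: F_sym_flip[of a m c n] mult.commute)
  also have "\<dots> = F c b a e m n * (sdim b * sdim e)"
    by (rule F_sym_weighted)
  finally show ?thesis by simp
qed

lemma F_swap_legs: "F a b c e n m = F b a e c n m"
  by (simp add: F_sym_outer[of a b c e] F_sym_flip[of e c b a])

lemma F_rotate_weighted: "F a b c e n m * (sdim b * sdim e) = F n a m c b e * (sdim n * sdim m)"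
proof -
  have "F a b c e n m * (sdim b * sdim e) = F c e a b n m * (sdim e * sdim b)"
    by (simp add: F_sym_flip[of a b c e] mult.commute)
  also have "\<dots> = F c m a n b e * (sdim m * sdim n)"
    by (rule F_sym_weighted)
  also have "\<dots> = F n a m c b e * (sdim n * sdim m)"
    by (simp add: F_sym_outer[of c m a n] mult.commute)
  finally show ?thesis .
qed

lemma F_rotate_inverse_weighted:
  "F a b c e n m * (sdim a * sdim c) = F m b n e c a * (sdim m * sdim n)"
proof -
  have "F m b n e c a * (sdim b * sdim e) = F c m a n b e * (sdim c * sdim a)"
    by (rule F_rotate_weighted)
  also have "\<dots> = F a m c n e b * (sdim c * sdim a)"
    by (simp add: F_reflect[of c m a n])
  finally have "F m b n e c a * (sdim b * sdim e) * (sdim m * sdim n)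
      = F a m c n e b * (sdim m * sdim n) * (sdim c * sdim a)"
    by (simp add: mult_ac)
  also have "\<dots> = F a b c e n m * (sdim b * sdim e) * (sdim c * sdim a)"
    by (simp add: F_sym_weighted)
  finally show ?thesis by (simp add: mult_ac)
qed

text \<open>By row orthonormality only the term n = n' of the pentagon's right-hand side survives.\<close>

lemma pentagon_contract_row:
  assumes "N b c n'" "N a n' l"
  shows "(\<Sum>m\<in>UNIV. cnj (F a b c l n' m) * (F m c d e s l * F a b s e t m))
       = F a n' d e t l * F b c d t s n'"
proof -
  have orth: "(F a n d e t l * F b c d t s n) * (\<Sum>m\<in>UNIV. F a b c l n m * cnj (F a b c l n' m))
      = (if n = n' then F a n d e t l * F b c d t s n else 0)" for n
  proof (cases "F a n d e t l * F b c d t s n = 0")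
    case False
    then have "N a n l" "N b c n" using F_nonzero_admissible by (metis mult_eq_0_iff)+
    then show ?thesis using F_rows_orthonormal[of b c n a l n'] assms by simp
  qed auto
  have "(\<Sum>m\<in>UNIV. cnj (F a b c l n' m) * (F m c d e s l * F a b s e t m))
     = (\<Sum>m\<in>UNIV. \<Sum>n\<in>UNIV. cnj (F a b c l n' m) * (F a b c l n m * (F a n d e t l * F b c d t s n)))"
    by (simp add: pentagon sum_distrib_left mult.assoc)
  also have "\<dots> = (\<Sum>n\<in>UNIV. (F a n d e t l * F b c d t s n) *
                    (\<Sum>m\<in>UNIV. F a b c l n m * cnj (F a b c l n' m)))"
    by (subst sum.swap) (simp add: sum_distrib_left mult_ac)
  also have "\<dots> = F a n' d e t l * F b c d t s n'"
    by (simp add: orth)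
  finally show ?thesis .
qed

lemma ladder_eq:
  "ladder N qd F a b c d j k p q x = F a p q c x j * F p b d q x k * (sdim p * sdim q / sdim x)"
proof (cases "N p q x")
  case True
  then show ?thesis
    by (simp add: ladder_def hdiag_def sdim_def real_sqrt_mult real_sqrt_divide)
next
  case False
  then have "F a p q c x j = 0" using F_nonzero_admissible by blast
  with False show ?thesis by (simp add: ladder_def)
qed

lemma coeff_e_ladder_eq_F:
  assumes "N a i b" "N i d c"
  shows "coeff_e F a b i c d (ladder N qd F a b c d j k p q)
       = sdim i * sdim p * sdim q / (sdim b * sdim c) * (F i a p k j b * F i d q j k c)"
proof -
  have summand: "cnj (hdiag F a b i c d x) * ladder N qd F a b c d j k p q x
     = sdim j * sdim q / sdim c * (cnj (F d b a c i x) * (F x a j q p c * F d b p q k x))" for x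
  proof -
    have "F a p q c x j = F x a j q p c * (sdim x * sdim j) / (sdim p * sdim c)"
      using F_rotate_weighted[of a p q c x j] by (simp add: field_simps)
    then show ?thesis
      by (simp add: hdiag_def ladder_eq F_reflect[of a b d c x i] F_reflect[of p b d q x k]
          field_simps)
  qed
  have "N b a i" "N d i c" using assms N_swap12 N_swap23 by metis+
  then have "coeff_e F a b i c d (ladder N qd F a b c d j k p q)
     = sdim j * sdim q / sdim c * (F d i j q k c * F b a j k p i)"
    unfolding coeff_e_def summand sum_distrib_left[symmetric]
    by (simp only: pentagon_contract_row)
  also have "\<dots> = sdim i * sdim p * sdim q / (sdim b * sdim c) * (F i a p k j b * F i d q j k c)"
  proof -
    have "F b a j k p i = F i a p k j b * (sdim i * sdim p) / (sdim b * sdim j)"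
      using F_rotate_inverse_weighted[of b a j k p i] by (simp add: field_simps)
    then show ?thesis by (simp add: F_swap_legs[of d i j q k c] field_simps)
  qed
  finally show ?thesis .
qed

lemma G6j_product_eq_F:
  "(if N i j k then complex_of_real (sqrt (qd i * qd j * qd k) / sqrt (qd a * qd b * qd c * qd d))
                    * G6j qd F i k j p a b * G6j qd F i j k q d c
    else 0)
   = sdim i * sdim p * sdim q / (sdim b * sdim c) * (F i a p k j b * F i d q j k c)"
proof (cases "N i j k")
  case True
  have "complex_of_real (sqrt (qd i * qd j * qd k) / sqrt (qd a * qd b * qd c * qd d))
           * G6j qd F i k j p a b * G6j qd F i j k q d c
      = sdim i * sdim j * sdim k / (sdim a * sdim b * sdim c * sdim d)
           * (sdim a * sdim p / sdim j * F i a p k j b) * (sdim d * sdim q / sdim k * F i d q j k c)"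
    by (simp add: G6j_def sdim_def real_sqrt_mult real_sqrt_divide)
  also have "\<dots> = sdim i * sdim p * sdim q / (sdim b * sdim c) * (F i a p k j b * F i d q j k c)"
    by (simp add: field_simps)
  finally show ?thesis using True by simp
next
  case False
  then have "F i d q j k c = 0" using F_nonzero_admissible N_swap23 by blast
  with False show ?thesis by simp
qed

end

theorem mainTheorem7:
  fixes N :: "'l::finite \<Rightarrow> 'l \<Rightarrow> 'l \<Rightarrow> bool" and u :: 'l and qd :: "'l \<Rightarrow> real"
    and F :: "'l \<Rightarrow> 'l \<Rightarrow> 'l \<Rightarrow> 'l \<Rightarrow> 'l \<Rightarrow> 'l \<Rightarrow> complex"
    and a b i c d :: 'l
  assumes "sym_ufc N u qd F"
    and "hbasis N (HIdx a b i c d)"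
  shows "comult N qd F (HIdx a b i c d) =
    (\<lambda>e. case e of (HIdx a' p j c' q, HIdx p' b' k q' d') \<Rightarrow>
       (if a' = a \<and> c' = c \<and> p' = p \<and> q' = q \<and> b' = b \<and> d' = d
           \<and> hbasis N (HIdx a p j c q) \<and> hbasis N (HIdx p b k q d) \<and> N i j k
        then complex_of_real (sqrt (qd i * qd j * qd k) / sqrt (qd a * qd b * qd c * qd d))
               * G6j qd F i k j p a b * G6j qd F i j k q d c
        else 0))"
proof -
  interpret sym_fusion_cat N u qd F by (rule sym_fusion_cat.intro) (rule assms(1))
  have "N a i b" "N i d c" using assms(2) by auto
  then have coeff: "coeff_e F a b i c d (ladder N qd F a b c d j k p q)
      = (if N i j k then complex_of_real (sqrt (qd i * qd j * qd k) / sqrt (qd a * qd b * qd c * qd d))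
               * G6j qd F i k j p a b * G6j qd F i j k q d c else 0)" for j k p q
    by (simp only: coeff_e_ladder_eq_F G6j_product_eq_F)
  show ?thesis
    by (rule ext) (simp add: coeff split: prod.split hidx.split del: hbasis.simps)
qed

end
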